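(* For $A=\mathbb Z\times\mathbb Z_2$ the Tamanoi type equation fails. Concretely, $\zeta^{(A)}_{({\rm pt},\{e\})}(t)=1+t+2t^2+O(t^3)$, $\zeta^{(A)}_{({\rm pt},\mathbb Z_2)}(t)=1+2t+4t^2+O(t^3)$ and $\chi^{(A)}({\rm pt},\mathbb Z_2)=2$, so that $\zeta^{(A)}_{({\rm pt},\mathbb Z_2)}(t)\neq\left(\zeta^{(A)}_{({\rm pt},\{e\})}(t)\right)^{\chi^{(A)}({\rm pt},\mathbb Z_2)}$.
   Context: For a finitely generated group $A$ and finite group $G$ acting on the one-point space ${\rm pt}$, $\chi^{(A)}({\rm pt},G)=|{\rm Hom}(A,G)|/|G|$. $G_n=G\wr S_n=G^n\rtimes S_n$ is the wreath product (multiplication $((g_i),s)((g'_i),s')=((g_ig'_{s^{-1}(i)}),ss')$), and $\zeta^{(A)}_{({\rm pt},G)}(t)=1+\sum_{n\ge1}\chi^{(A)}({\rm pt},G_n)t^n$. For a finitely generated $A$, the Tamanoi type equation is said to hold if there is a power series $Z_A(t)\in1+t\mathbb Q[[t]]$ such that for every finite group $G$ and every $G$-invariant union $X$ of cells of a finite $G$-CW-complex, $1+\sum_{n\ge1}\chi^{(A)}(X^n,G_n)t^n=Z_A(t)^{\chi^{(A)}(X,G)}$, where $\chi^{(A)}(X,G)=\frac1{|G|}\sum_{\varphi\in{\rm Hom}(A,G)}\chi(X^{\varphi(A)})$ with $\chi$ the Euler characteristic with compact support, $G_n$ acting on $X^n$ by $((g_i),s)(x_i)=(g_ix_{s^{-1}(i)})$,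 and $f^c=\exp(c\log f)$; necessarily $Z_A=\zeta^{(A)}_{({\rm pt},\{e\})}$. *)

theory Defs
  imports "HOL-Algebra.Group" "HOL-Library.FuncSet" "HOL-Combinatorics.Permutations"
          "HOL-Computational_Algebra.Formal_Power_Series"
begin

definition ZxZ2 :: "(int \<times> bool) monoid" where
  "ZxZ2 = \<lparr>carrier = UNIV, monoid.mult = (\<lambda>(a, x) (b, y). (a + b, x \<noteq> y)), one = (0, False)\<rparr>"

definition trivial_grp :: "unit monoid" where
  "trivial_grp = \<lparr>carrier = {()}, monoid.mult = (\<lambda>_ _. ()), one = ()\<rparr>"

definition Z2_grp :: "bool monoid" where
  "Z2_grp = \<lparr>carrier = UNIV, monoid.mult = (\<lambda>x y. x \<noteq> y), one = False\<rparr>"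

definition wreath :: "('a, 'm) monoid_scheme \<Rightarrow> nat \<Rightarrow> ((nat \<Rightarrow> 'a) \<times> (nat \<Rightarrow> nat)) monoid" where
  "wreath G n =
     \<lparr>carrier = {(g, s). g \<in> {1..n} \<rightarrow>\<^sub>E carrier G \<and> s permutes {1..n}},
      monoid.mult = (\<lambda>(g, s) (g', s'). (\<lambda>i\<in>{1..n}. monoid.mult G (g i) (g' (inv_into UNIV s i)), s \<circ> s')),
      one = (\<lambda>i\<in>{1..n}. monoid.one G, id)\<rparr>"

definition chiA :: "('a, 'm) monoid_scheme \<Rightarrow> rat" where
  "chiA G = of_nat (card (hom ZxZ2 G)) / of_nat (card (carrier G))"

definition zetaA :: "('a, 'm) monoid_scheme \<Rightarrow> rat fps" where
  "zetaA G = Abs_fps (\<lambda>n. if n = 0 then 1 else chiA (wreath G n))"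

text \<open>f^c = exp(c log f) for f with constant term 1:
  log f = ln(1+X) composed with (f - 1), exp g = exp(X) composed with g.\<close>
definition fps_powr :: "rat fps \<Rightarrow> rat \<Rightarrow> rat fps" where
  "fps_powr f c = fps_exp 1 oo (fps_const c * (fps_ln 1 oo (f - 1)))"

end

theory Submission
  imports Defs
begin

text \<open>A homomorphism \<open>\<int> \<times> \<int>\<^sub>2 \<rightarrow> H\<close> is determined by the images \<open>(a, b)\<close> of the
  generators, subject only to \<open>b\<^sup>2 = 1\<close> and \<open>ab = ba\<close>; so \<open>chiA H\<close> counts such pairs divided
  by \<open>|H|\<close>, an isomorphism invariant. As \<open>G \<wr> S\<^sub>1 \<cong> G\<close> and \<open>G \<wr> S\<^sub>2 \<cong> (G \<times> G) \<rtimes> \<int>\<^sub>2\<close>,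
  finite counts give \<open>zetaA {e} = 1 + t + 2t\<^sup>2 + \<dots>\<close> and \<open>zetaA \<int>\<^sub>2 = 1 + 2t + 4t\<^sup>2 + \<dots>\<close>.
  For \<open>f = 1 + f\<^sub>1t + f\<^sub>2t\<^sup>2 + \<dots>\<close> the \<open>t\<^sup>2\<close>-coefficient of \<open>f\<^sup>c\<close> is \<open>c f\<^sub>2 + c(c - 1)/2 f\<^sub>1\<^sup>2\<close>,
  so squaring the first series gives \<open>5t\<^sup>2\<close> instead of \<open>4t\<^sup>2\<close>; and any \<open>Z\<close> with
  \<open>Z\<^sup>1 = zetaA {e}\<close> agrees with \<open>zetaA {e}\<close> up to \<open>t\<^sup>2\<close>, so it fails in the same way.\<close>

lemma ZxZ2_simps [simp]:
  "carrier ZxZ2 = UNIV"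
  "(a, x) \<otimes>\<^bsub>ZxZ2\<^esub> (b, y) = (a + b, x \<noteq> y)"
  "\<one>\<^bsub>ZxZ2\<^esub> = (0, False)"
  by (simp_all add: ZxZ2_def)

lemma group_ZxZ2: "group ZxZ2"
proof (rule groupI)
  fix x y z :: "int \<times> bool"
  show "x \<otimes>\<^bsub>ZxZ2\<^esub> y \<otimes>\<^bsub>ZxZ2\<^esub> z = x \<otimes>\<^bsub>ZxZ2\<^esub> (y \<otimes>\<^bsub>ZxZ2\<^esub> z)"
    by (cases x; cases y; cases z) auto
  show "\<one>\<^bsub>ZxZ2\<^esub> \<otimes>\<^bsub>ZxZ2\<^esub> x = x" by (cases x) auto
  show "\<exists>y\<in>carrier ZxZ2. y \<otimes>\<^bsub>ZxZ2\<^esub> x = \<one>\<^bsub>ZxZ2\<^esub>"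
    by (cases x) (rule bexI[of _ "(- fst x, snd x)"], auto)
qed auto

lemma ZxZ2_int_pow: "(1, False) [^]\<^bsub>ZxZ2\<^esub> (k::int) = (k, False)"
proof -
  interpret group ZxZ2 by (rule group_ZxZ2)
  have nat_pow: "(1::int, False) [^]\<^bsub>ZxZ2\<^esub> (n::nat) = (int n, False)" for n
    by (induction n) auto
  show ?thesis
  proof (cases k rule: int_cases)
    case (neg n)
    then obtain m where k: "k = - int m" by blast
    have "inv\<^bsub>ZxZ2\<^esub> (int m, False) = (- int m, False)"
      by (intro inv_equality) auto
    then show ?thesis by (simp add: k int_pow_neg_int nat_pow)
  qed (simp add: int_pow_int nat_pow)
qed

lemma (in group) int_pow_commute:
  assumes "x \<in> carrier G" "y \<in> carrier G" "x \<otimes> y = y \<otimes> x"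
  shows "x [^] (k::int) \<otimes> y = y \<otimes> x [^] k"
proof (cases k rule: int_cases)
  case (nonneg n)
  then show ?thesis using group_commutes_pow[OF assms(3,1,2)] by (simp add: int_pow_int)
next
  case (neg n)
  then obtain m where k: "k = - int m" by blast
  define c where "c = x [^] m"
  have c: "c \<in> carrier G" "c \<otimes> y = y \<otimes> c"
    using assms group_commutes_pow[OF assms(3,1,2)] by (simp_all add: c_def)
  have "inv c \<otimes> y = inv c \<otimes> (y \<otimes> c) \<otimes> inv c"
    using c assms by (simp add: m_assoc)
  also have "\<dots> = y \<otimes> inv c"
    using c assms by (simp flip: c(2) add: m_assoc[symmetric])
  finally show ?thesis using assms by (simp add: k int_pow_neg_int c_def)
qed

definition ZxZ2_generator_images :: "('a, 'm) monoid_scheme \<Rightarrow> ('a \<times> 'a) set" where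
  "ZxZ2_generator_images H =
     {(a, b) \<in> carrier H \<times> carrier H. b \<otimes>\<^bsub>H\<^esub> b = \<one>\<^bsub>H\<^esub> \<and> a \<otimes>\<^bsub>H\<^esub> b = b \<otimes>\<^bsub>H\<^esub> a}"

lemma hom_ZxZ2_apply:
  assumes "group H" "h \<in> hom ZxZ2 H"
  shows "h (k, x) = h (1, False) [^]\<^bsub>H\<^esub> k \<otimes>\<^bsub>H\<^esub> (if x then h (0, True) else \<one>\<^bsub>H\<^esub>)"
proof -
  interpret group_hom ZxZ2 H h
    using assms group_ZxZ2 by (simp add: group_hom_def group_hom_axioms_def)
  have "(k, x) = (1, False) [^]\<^bsub>ZxZ2\<^esub> k \<otimes>\<^bsub>ZxZ2\<^esub> (if x then (0, True) else \<one>\<^bsub>ZxZ2\<^esub>)"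
    by (simp add: ZxZ2_int_pow)
  then show ?thesis
    by (metis UNIV_I ZxZ2_simps(1) hom_int_pow hom_mult hom_one)
qed

lemma hom_ZxZ2_generator_images:
  assumes "group H" "h \<in> hom ZxZ2 H"
  shows "(h (1, False), h (0, True)) \<in> ZxZ2_generator_images H"
proof -
  interpret group_hom ZxZ2 H h
    using assms group_ZxZ2 by (simp add: group_hom_def group_hom_axioms_def)
  have "h (0, True) \<otimes>\<^bsub>H\<^esub> h (0, True) = \<one>\<^bsub>H\<^esub>"
    using hom_mult[of "(0, True)" "(0, True)"] hom_one by simp
  moreover have "h (1, False) \<otimes>\<^bsub>H\<^esub> h (0, True) = h (0, True) \<otimes>\<^bsub>H\<^esub> h (1, False)"
    using hom_mult[of "(1, False)" "(0, True)"] hom_mult[of "(0, True)" "(1, False)"] by simp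
  ultimately show ?thesis by (simp add: ZxZ2_generator_images_def)
qed

lemma ZxZ2_hom_from_generator_images:
  assumes "group H" "(a, b) \<in> ZxZ2_generator_images H"
  shows "(\<lambda>(k, x). a [^]\<^bsub>H\<^esub> k \<otimes>\<^bsub>H\<^esub> (if x then b else \<one>\<^bsub>H\<^esub>)) \<in> hom ZxZ2 H"
    (is "?h \<in> _")
proof -
  interpret H: group H by (rule assms(1))
  have a: "a \<in> carrier H" and b: "b \<in> carrier H" and bb: "b \<otimes>\<^bsub>H\<^esub> b = \<one>\<^bsub>H\<^esub>"
    and ab: "a \<otimes>\<^bsub>H\<^esub> b = b \<otimes>\<^bsub>H\<^esub> a"
    using assms(2) by (auto simp: ZxZ2_generator_images_def)
  have "?h ((k, x) \<otimes>\<^bsub>ZxZ2\<^esub> (l, y)) = ?h (k, x) \<otimes>\<^bsub>H\<^esub> ?h (l, y)" for k l x y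
  proof -
    have "?h ((k, x) \<otimes>\<^bsub>ZxZ2\<^esub> (l, y))
        = a [^]\<^bsub>H\<^esub> k \<otimes>\<^bsub>H\<^esub> a [^]\<^bsub>H\<^esub> l \<otimes>\<^bsub>H\<^esub> (if x \<noteq> y then b else \<one>\<^bsub>H\<^esub>)"
      using a by (simp add: H.int_pow_mult)
    also have "\<dots> = ?h (k, x) \<otimes>\<^bsub>H\<^esub> ?h (l, y)"
      using a b bb H.int_pow_commute[OF a b ab, of l]
      by (cases x; cases y; simp add: H.m_assoc; simp add: H.m_assoc[symmetric])
    finally show ?thesis .
  qed
  then show ?thesis
    using a b by (auto simp: hom_def)
qed

lemma card_hom_ZxZ2:
  assumes "group H"
  shows "card (hom ZxZ2 H) = card (ZxZ2_generator_images H)"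
proof (rule bij_betw_same_card[of "\<lambda>h. (h (1, False), h (0, True))"], rule bij_betw_imageI)
  show "inj_on (\<lambda>h. (h (1, False), h (0, True))) (hom ZxZ2 H)"
  proof (rule inj_onI, rule ext)
    fix h h' p
    assume h: "h \<in> hom ZxZ2 H" and h': "h' \<in> hom ZxZ2 H"
      and "(h (1, False), h (0, True)) = (h' (1, False), h' (0, True))"
    then show "h p = h' p"
      using hom_ZxZ2_apply[OF assms h, of "fst p" "snd p"] hom_ZxZ2_apply[OF assms h', of "fst p" "snd p"]
      by simp
  qed
  show "(\<lambda>h. (h (1, False), h (0, True))) ` hom ZxZ2 H = ZxZ2_generator_images H"
  proof (intro equalityI subsetI)
    fix p assume p: "p \<in> ZxZ2_generator_images H"
    obtain a b where ab: "p = (a, b)" by fastforce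
    define h where "h = (\<lambda>(k :: int, x). a [^]\<^bsub>H\<^esub> k \<otimes>\<^bsub>H\<^esub> (if x then b else \<one>\<^bsub>H\<^esub>))"
    have "h \<in> hom ZxZ2 H"
      using ZxZ2_hom_from_generator_images[OF assms] p ab by (simp add: h_def)
    moreover have "p = (h (1, False), h (0, True))"
      using p ab assms
      by (simp add: h_def ZxZ2_generator_images_def group.int_pow_1 group.is_monoid monoid.r_one)
    ultimately show "p \<in> (\<lambda>h. (h (1, False), h (0, True))) ` hom ZxZ2 H" by blast
  qed (auto intro: hom_ZxZ2_generator_images[OF assms])
qed

lemma card_hom_iso:
  assumes A: "carrier A = UNIV" and H: "group H" and E: "E \<in> iso H K"
  shows "card (hom A H) = card (hom A K)"
proof (rule bij_betw_same_card[of "\<lambda>h. E \<circ> h"], rule bij_betw_imageI)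
  have inj: "inj_on E (carrier H)" and surj: "E ` carrier H = carrier K"
    using E by (auto simp: iso_iff)
  show "inj_on (\<lambda>h. E \<circ> h) (hom A H)"
  proof (rule inj_onI, rule ext)
    fix h h' x
    assume h: "h \<in> hom A H" and h': "h' \<in> hom A H" and "E \<circ> h = E \<circ> h'"
    then have "E (h x) = E (h' x)" by (metis comp_apply)
    moreover have "h x \<in> carrier H" "h' x \<in> carrier H"
      using hom_in_carrier[OF h] hom_in_carrier[OF h'] A by auto
    ultimately show "h x = h' x"
      using inj by (simp add: inj_on_eq_iff)
  qed
  show "(\<lambda>h. E \<circ> h) ` hom A H = hom A K"
  proof (intro equalityI subsetI)
    fix h' assume h': "h' \<in> hom A K"
    let ?h = "inv_into (carrier H) E \<circ> h'"
    have "?h \<in> hom A H"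
      using h' group.iso_set_sym[OF H E] by (simp add: hom_compose iso_imp_homomorphism)
    moreover have "h' = E \<circ> ?h"
      using h' A surj by (auto simp: f_inv_into_f hom_in_carrier)
    ultimately show "h' \<in> (\<lambda>h. E \<circ> h) ` hom A H" by blast
  qed (use hom_compose[OF _ iso_imp_homomorphism[OF E]] in blast)
qed

lemma chiA_iso:
  assumes "group H" "H \<cong> K"
  shows "chiA H = chiA K"
proof -
  obtain E where E: "E \<in> iso H K" using assms(2) by (auto simp: is_iso_def)
  show ?thesis
    using card_hom_iso[OF ZxZ2_simps(1) assms(1) E] iso_same_card[OF assms(2)] by (simp add: chiA_def)
qed

lemma chiA_eq_card_generator_images:
  "group H \<Longrightarrow> chiA H = of_nat (card (ZxZ2_generator_images H)) / of_nat (card (carrier H))"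
  by (simp add: chiA_def card_hom_ZxZ2)

lemma wreath_simps:
  "carrier (wreath G n) = {(g, s). g \<in> {1..n} \<rightarrow>\<^sub>E carrier G \<and> s permutes {1..n}}"
  "(g, s) \<otimes>\<^bsub>wreath G n\<^esub> (g', s') = (\<lambda>i\<in>{1..n}. g i \<otimes>\<^bsub>G\<^esub> g' (inv_into UNIV s i), s \<circ> s')"
  "\<one>\<^bsub>wreath G n\<^esub> = (\<lambda>i\<in>{1..n}. \<one>\<^bsub>G\<^esub>, id)"
  by (simp_all add: wreath_def)

lemma wreath_one_iso: "(\<lambda>x. (\<lambda>i\<in>{1..1::nat}. x, id)) \<in> iso G (wreath G 1)" (is "?E \<in> _")
proof (rule isoI)
  show "?E \<in> hom G (wreath G 1)"
    by (auto simp: hom_def wreath_simps inv_id restrict_PiE_iff)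
  show "bij_betw ?E (carrier G) (carrier (wreath G 1))"
  proof (rule bij_betw_imageI)
    show "inj_on ?E (carrier G)"
      by (rule inj_onI) (drule arg_cong[of _ _ "\<lambda>p. fst p 1"], simp)
    show "?E ` carrier G = carrier (wreath G 1)"
    proof (intro equalityI subsetI)
      fix p assume "p \<in> ?E ` carrier G"
      then obtain x where "x \<in> carrier G" "p = ?E x" by blast
      then show "p \<in> carrier (wreath G 1)"
        unfolding wreath_simps by (simp only: restrict_PiE_iff) simp
    next
      fix p assume "p \<in> carrier (wreath G 1)"
      then obtain g s where p: "p = (g, s)" and g: "g \<in> {1..1} \<rightarrow>\<^sub>E carrier G" and "s permutes {1..1}"
        by (auto simp: wreath_simps)
      then have "?E (g 1) = p"
        using g by (auto simp: PiE_iff extensional_def fun_eq_iff)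
      moreover have "g 1 \<in> carrier G" using g by auto
      ultimately show "p \<in> ?E ` carrier G" by blast
    qed
  qed
qed

text \<open>\<open>(x, y, p)\<close> stands for \<open>((x, y), \<sigma>)\<close> in \<open>G \<wr> S\<^sub>2\<close>, with \<open>\<sigma>\<close> the transposition of 1 and 2
  if \<open>p\<close> and the identity otherwise.\<close>

definition wreath_two :: "('a, 'm) monoid_scheme \<Rightarrow> ('a \<times> 'a \<times> bool) monoid" where
  "wreath_two G =
     \<lparr>carrier = carrier G \<times> carrier G \<times> UNIV,
      monoid.mult = (\<lambda>(x, y, p) (x', y', p').
        (x \<otimes>\<^bsub>G\<^esub> (if p then y' else x'), y \<otimes>\<^bsub>G\<^esub> (if p then x' else y'), p \<noteq> p')),
      one = (\<one>\<^bsub>G\<^esub>, \<one>\<^bsub>G\<^esub>, False)\<rparr>"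

lemma wreath_two_simps [simp]:
  "carrier (wreath_two G) = carrier G \<times> carrier G \<times> UNIV"
  "(x, y, p) \<otimes>\<^bsub>wreath_two G\<^esub> (x', y', p') =
     (x \<otimes>\<^bsub>G\<^esub> (if p then y' else x'), y \<otimes>\<^bsub>G\<^esub> (if p then x' else y'), p \<noteq> p')"
  "\<one>\<^bsub>wreath_two G\<^esub> = (\<one>\<^bsub>G\<^esub>, \<one>\<^bsub>G\<^esub>, False)"
  by (simp_all add: wreath_two_def)

lemma group_wreath_two:
  assumes "group G"
  shows "group (wreath_two G)"
proof -
  interpret G: group G by (rule assms)
  show ?thesis
  proof (rule groupI)
    fix u v assume "u \<in> carrier (wreath_two G)" "v \<in> carrier (wreath_two G)"
    then show "u \<otimes>\<^bsub>wreath_two G\<^esub> v \<in> carrier (wreath_two G)"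
      by (cases u rule: prod_cases3; cases v rule: prod_cases3) simp
  next
    fix u v w assume "u \<in> carrier (wreath_two G)" "v \<in> carrier (wreath_two G)" "w \<in> carrier (wreath_two G)"
    then show "u \<otimes>\<^bsub>wreath_two G\<^esub> v \<otimes>\<^bsub>wreath_two G\<^esub> w = u \<otimes>\<^bsub>wreath_two G\<^esub> (v \<otimes>\<^bsub>wreath_two G\<^esub> w)"
      by (cases u rule: prod_cases3; cases v rule: prod_cases3; cases w rule: prod_cases3) (simp add: G.m_assoc)
  next
    fix u assume "u \<in> carrier (wreath_two G)"
    then obtain x y p where u: "u = (x, y, p)" and xy: "x \<in> carrier G" "y \<in> carrier G"
      by (cases u rule: prod_cases3) simp
    show "\<one>\<^bsub>wreath_two G\<^esub> \<otimes>\<^bsub>wreath_two G\<^esub> u = u"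
      using xy by (simp add: u)
    have "(inv\<^bsub>G\<^esub> (if p then y else x), inv\<^bsub>G\<^esub> (if p then x else y), p) \<otimes>\<^bsub>wreath_two G\<^esub> u
        = \<one>\<^bsub>wreath_two G\<^esub>"
      using xy by (simp add: u)
    then show "\<exists>v\<in>carrier (wreath_two G). v \<otimes>\<^bsub>wreath_two G\<^esub> u = \<one>\<^bsub>wreath_two G\<^esub>"
      using xy by (intro bexI[of _ "(inv\<^bsub>G\<^esub> (if p then y else x), inv\<^bsub>G\<^esub> (if p then x else y), p)"]) simp_all
  qed simp
qed

lemma wreath_two_iso:
  "(\<lambda>(x, y, p). (\<lambda>i\<in>{1..2::nat}. if i = 1 then x else y, if p then Transposition.transpose 1 2 else id))
     \<in> iso (wreath_two G) (wreath G 2)"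
  (is "?E \<in> _")
proof (rule isoI)
  have one_two: "{1..2::nat} = {1, 2}" by auto
  have transp: "Transposition.transpose 1 2 permutes {1..2::nat}"
    by (rule permutes_swap_id) auto
  have E_carrier: "?E u \<in> carrier (wreath G 2)" if "u \<in> carrier (wreath_two G)" for u
    using that transp permutes_id
    by (cases u rule: prod_cases3) (auto simp: wreath_simps restrict_PiE_iff)
  have E_mult: "?E (u \<otimes>\<^bsub>wreath_two G\<^esub> v) = ?E u \<otimes>\<^bsub>wreath G 2\<^esub> ?E v" for u v
    by (cases u rule: prod_cases3; cases v rule: prod_cases3)
      (auto simp: wreath_simps fun_eq_iff numeral_2_eq_2 le_Suc_eq)
  show "?E \<in> hom (wreath_two G) (wreath G 2)"
    unfolding hom_def using E_carrier E_mult by blast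
  show "bij_betw ?E (carrier (wreath_two G)) (carrier (wreath G 2))"
  proof (rule bij_betw_imageI)
    show "inj_on ?E (carrier (wreath_two G))"
    proof (rule inj_onI)
      fix u v assume "?E u = ?E v"
      then have "fst (?E u) 1 = fst (?E v) 1" "fst (?E u) 2 = fst (?E v) 2" "snd (?E u) 1 = snd (?E v) 1"
        by simp_all
      then show "u = v"
        by (cases u rule: prod_cases3; cases v rule: prod_cases3) (auto split: if_splits)
    qed
    show "?E ` carrier (wreath_two G) = carrier (wreath G 2)"
    proof (intro equalityI subsetI)
      fix q assume "q \<in> carrier (wreath G 2)"
      then obtain g s where q: "q = (g, s)" and g: "g \<in> {1..2} \<rightarrow>\<^sub>E carrier G"
        and s: "s permutes {1..2}"
        by (auto simp: wreath_simps)
      have "s = id \<or> s = Transposition.transpose 1 2"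
        using s unfolding one_two by (simp only: permutes_doubleton_iff)
      then have "?E (g 1, g 2, s \<noteq> id) = q"
        using g by (auto simp: q PiE_iff extensional_def fun_eq_iff numeral_2_eq_2 le_Suc_eq)
      moreover have "(g 1, g 2, s \<noteq> id) \<in> carrier (wreath_two G)"
        using g by auto
      ultimately show "q \<in> ?E ` carrier (wreath_two G)" by blast
    qed (use E_carrier in blast)
  qed
qed

lemma chiA_wreath_one:
  assumes "group G"
  shows "chiA (wreath G 1) = chiA G"
  using chiA_iso[OF assms is_isoI[OF wreath_one_iso]] by (rule sym)

lemma chiA_wreath_two:
  assumes "group G"
  shows "chiA (wreath G 2) = chiA (wreath_two G)"
  using chiA_iso[OF group_wreath_two[OF assms] is_isoI[OF wreath_two_iso]] by (rule sym)

lemma zetaA_nth_0: "fps_nth (zetaA G) 0 = 1"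
  by (simp add: zetaA_def)

lemma zetaA_nth_1: "group G \<Longrightarrow> fps_nth (zetaA G) 1 = chiA G"
  using chiA_wreath_one by (simp add: zetaA_def)

lemma zetaA_nth_2: "group G \<Longrightarrow> fps_nth (zetaA G) 2 = chiA (wreath_two G)"
  using chiA_wreath_two by (simp add: zetaA_def)

lemma card_ZxZ2_generator_images_eq_sum:
  assumes "finite (carrier H)"
  shows "card (ZxZ2_generator_images H) =
     (\<Sum>(a, b) \<in> carrier H \<times> carrier H.
        if b \<otimes>\<^bsub>H\<^esub> b = \<one>\<^bsub>H\<^esub> \<and> a \<otimes>\<^bsub>H\<^esub> b = b \<otimes>\<^bsub>H\<^esub> a then 1 else 0)"
proof -
  have "ZxZ2_generator_images H = {z \<in> carrier H \<times> carrier H.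
      case z of (a, b) \<Rightarrow> b \<otimes>\<^bsub>H\<^esub> b = \<one>\<^bsub>H\<^esub> \<and> a \<otimes>\<^bsub>H\<^esub> b = b \<otimes>\<^bsub>H\<^esub> a}"
    by (auto simp: ZxZ2_generator_images_def)
  then show ?thesis
    using assms by (simp only: card_eq_sum sum.inter_filter finite_cartesian_product) (simp add: case_prod_unfold)
qed

lemma group_trivial_grp: "group trivial_grp"
  by (rule groupI) (auto simp: trivial_grp_def)

lemma group_Z2_grp: "group Z2_grp"
  by (rule groupI) (auto simp: Z2_grp_def)

lemma chiA_trivial_grp: "chiA trivial_grp = 1"
  by (simp add: chiA_eq_card_generator_images group_trivial_grp card_ZxZ2_generator_images_eq_sum)
    (simp add: trivial_grp_def)

lemma chiA_Z2_grp: "chiA Z2_grp = 2"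
  by (simp add: chiA_eq_card_generator_images group_Z2_grp
      card_ZxZ2_generator_images_eq_sum sum.cartesian_product' UNIV_bool)
    (simp add: Z2_grp_def UNIV_bool)

lemma chiA_wreath_two_trivial_grp: "chiA (wreath_two trivial_grp) = 2"
  by (simp add: chiA_eq_card_generator_images group_wreath_two group_trivial_grp
      card_ZxZ2_generator_images_eq_sum sum.cartesian_product' UNIV_bool)
    (simp add: trivial_grp_def)

lemma chiA_wreath_two_Z2_grp: "chiA (wreath_two Z2_grp) = 4"
  by (simp add: chiA_eq_card_generator_images group_wreath_two group_Z2_grp
      card_ZxZ2_generator_images_eq_sum sum.cartesian_product' UNIV_bool)
    (simp add: Z2_grp_def UNIV_bool)

lemma fps_compose_nth_1_2:
  fixes a b :: "'a::field fps"
  assumes b0: "fps_nth b 0 = 0"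
  shows "fps_nth (a oo b) 1 = fps_nth a 1 * fps_nth b 1"
    and "fps_nth (a oo b) 2 = fps_nth a 1 * fps_nth b 2 + fps_nth a 2 * (fps_nth b 1)^2"
proof -
  have "fps_nth (b^2) 1 = 0" "fps_nth (b^2) 2 = (fps_nth b 1)^2"
    using b0 by (simp_all add: power2_eq_square fps_mult_nth numeral_2_eq_2 atLeast0AtMost atMost_Suc)
  then show "fps_nth (a oo b) 1 = fps_nth a 1 * fps_nth b 1"
    and "fps_nth (a oo b) 2 = fps_nth a 1 * fps_nth b 2 + fps_nth a 2 * (fps_nth b 1)^2"
    using b0 by (simp_all add: fps_compose_nth numeral_2_eq_2 atLeast0AtMost atMost_Suc)
qed

lemma fps_powr_nth_1_2:
  assumes f0: "fps_nth f 0 = 1"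
  shows "fps_nth (fps_powr f c) 1 = c * fps_nth f 1"
    and "fps_nth (fps_powr f c) 2 = c * fps_nth f 2 + c * (c - 1) / 2 * (fps_nth f 1)^2"
proof -
  define L where "L = fps_ln 1 oo (f - 1)"
  have "fps_nth (f - 1) 0 = 0" using f0 by simp
  note ln_oo = fps_compose_nth_1_2[OF this, of "fps_ln 1"]
  have L1: "fps_nth L 1 = fps_nth f 1" and L2: "fps_nth L 2 = fps_nth f 2 - (fps_nth f 1)^2 / 2"
    using ln_oo by (simp_all add: L_def fps_ln_nth)
  have "fps_nth (fps_const c * L) 0 = 0" by (simp add: L_def fps_ln_nth)
  note exp_oo = fps_compose_nth_1_2[OF this, of "fps_exp 1"]
  show "fps_nth (fps_powr f c) 1 = c * fps_nth f 1"
    using exp_oo(1) L1 by (simp add: fps_powr_def L_def)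
  have "fps_nth (fps_powr f c) 2 = c * fps_nth L 2 + (c * fps_nth L 1)^2 / 2"
    using exp_oo(2) by (simp add: fps_powr_def L_def)
  then show "fps_nth (fps_powr f c) 2 = c * fps_nth f 2 + c * (c - 1) / 2 * (fps_nth f 1)^2"
    unfolding L1 L2 by (simp add: field_simps power2_eq_square)
qed

theorem mainTheorem8:
  shows "fps_nth (zetaA trivial_grp) 0 = 1 \<and> fps_nth (zetaA trivial_grp) 1 = 1 \<and> fps_nth (zetaA trivial_grp) 2 = 2
       \<and> fps_nth (zetaA Z2_grp) 0 = 1 \<and> fps_nth (zetaA Z2_grp) 1 = 2 \<and> fps_nth (zetaA Z2_grp) 2 = 4
       \<and> chiA Z2_grp = 2
       \<and> zetaA Z2_grp \<noteq> fps_powr (zetaA trivial_grp) (chiA Z2_grp)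
       \<and> \<not> (\<exists>Z :: rat fps. fps_nth (Z) 0 = 1
              \<and> zetaA trivial_grp = fps_powr Z (chiA trivial_grp)
              \<and> zetaA Z2_grp = fps_powr Z (chiA Z2_grp))"
proof -
  have trivial: "fps_nth (zetaA trivial_grp) 0 = 1" "fps_nth (zetaA trivial_grp) 1 = 1"
    "fps_nth (zetaA trivial_grp) 2 = 2"
    using zetaA_nth_1[OF group_trivial_grp] zetaA_nth_2[OF group_trivial_grp]
    by (simp_all add: zetaA_nth_0 chiA_trivial_grp chiA_wreath_two_trivial_grp)
  have Z2: "fps_nth (zetaA Z2_grp) 0 = 1" "fps_nth (zetaA Z2_grp) 1 = 2" "fps_nth (zetaA Z2_grp) 2 = 4"
    using zetaA_nth_1[OF group_Z2_grp] zetaA_nth_2[OF group_Z2_grp]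
    by (simp_all add: zetaA_nth_0 chiA_Z2_grp chiA_wreath_two_Z2_grp)
  have square_nth_2: "fps_nth (fps_powr f 2) 2 = 5"
    if "fps_nth f 0 = 1" "fps_nth f 1 = 1" "fps_nth f 2 = 2" for f
    using fps_powr_nth_1_2(2)[OF that(1), of 2] that by simp
  have "zetaA Z2_grp \<noteq> fps_powr (zetaA trivial_grp) 2"
    using square_nth_2[OF trivial] Z2(3) by auto
  moreover have "fps_nth Z 1 = 1 \<and> fps_nth Z 2 = 2"
    if "fps_nth Z 0 = 1" "zetaA trivial_grp = fps_powr Z 1" for Z
    using fps_powr_nth_1_2[OF that(1), of 1] trivial that(2) by simp
  ultimately show ?thesis
    using trivial Z2 square_nth_2 chiA_trivial_grp chiA_Z2_grp by force
qed

end
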